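(* Let $m,n\ge1$, and for each $i\in[m]=\{1,\dots,m\}$ let $f_i:\mathbb{R}^n\to\mathbb{R}$ be differentiable with $s_i$-Lipschitz gradient ($s_i>0$) and $c_i$-strongly convex ($c_i>0$). Let $\alpha_i>0$ with $\sum_i\alpha_i=1$, $\beta_i>0$, $\delta>0$, and $0<\sigma_i<\frac{\sqrt{2c_i}}{\sqrt{2c_i}+\sqrt{\beta_i}}$. Let $\{w^k\}=\{(u^k,\lambda^k,z^k)\}_{k\ge0}$, with $u^k=(u_1^k,\dots,u_m^k)\in\mathbb{R}^{mn}$, $\lambda^k=(\lambda_1^k,\dots,\lambda_m^k)\in\mathbb{R}^{mn}$, $z^k\in\mathbb{R}^n$, be generated from arbitrary initial points by: for $k\ge0$, $i\in[m]$, (i) $u_i^{k+1}$ satisfies $\|e_i^k(u_i^{k+1})\|\le\sigma_i\|e_i^k(u_i^k)\|$, where $e_i^k(u_i)=\nabla f_i(u_i)-\lambda_i^k+\beta_i(u_i-z^k)$; (ii) $\lambda_i^{k+1}=\lambda_i^k-\beta_i(u_i^{k+1}-z^k)$; (iii) $z^{k+1}=\frac{1}{1+\delta}\cdot\frac{\sum_{i}\alpha_i(\beta_iu_i^{k+1}-\lambda_i^{k+1})}{\sum_i\alpha_i\beta_i}+\frac{\delta}{1+\delta}z^k$. Then for every $k\ge0$ and every $w=(u,\lambda,z)\in\mathbb{R}^{mn}\times\mathbb{R}^{mn}\times\mathbb{R}^n$, $$(w^{k+1}-w)^{\top}F(w^{k+1})\le(u^{k+1}-u)^{\top}\nabla_uL_{\alpha,\beta}(u^{k+1},\lambda^k,z^k)+\tfrac12\Big(\|v^k-v\|_{H_1}^2-\|v^{k+1}-v\|_{H_1}^2-\|v^k-v^{k+1}\|_{H_1}^2\Big),$$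 where $v=(\lambda,z)$, $v^k=(\lambda^k,z^k)$, and $$H_1=\begin{pmatrix}I_\alpha I_\beta^{-1}& I_\alpha B\\ B^{\top}I_\alpha&(1+\delta)B^{\top}I_\alpha I_\beta B\end{pmatrix}\succ0.$$
   Context: Notation: $B=(I_n,\dots,I_n)^{\top}\in\mathbb{R}^{mn\times n}$ ($m$ copies of the $n\times n$ identity); $I_\alpha=\mathrm{diag}(\alpha_1I_n,\dots,\alpha_mI_n)$ and $I_\beta=\mathrm{diag}(\beta_1I_n,\dots,\beta_mI_n)$; $\nabla f(u)=(\nabla f_1(u_1),\dots,\nabla f_m(u_m))\in\mathbb{R}^{mn}$. The augmented Lagrangian is $L_{\alpha,\beta}(u,\lambda,z)=\sum_{i=1}^m\alpha_i\big(f_i(u_i)-\lambda_i^{\top}(u_i-z)+\frac{\beta_i}{2}\|u_i-z\|^2\big)$, so $\nabla_uL_{\alpha,\beta}(u,\lambda,z)$ has $i$-th block $\alpha_i(\nabla f_i(u_i)-\lambda_i+\beta_i(u_i-z))$. The map $F$ is $F(w)=\big(I_\alpha(\nabla f(u)-\lambda),\ I_\alpha(u-Bz),\ B^{\top}I_\alpha\lambda\big)$. For a symmetric positive definite matrix $H$, $\|x\|_H=(x^{\top}Hx)^{1/2}$. *)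

theory Defs
  imports "HOL-Analysis.Analysis"
begin

text \<open>Agents are indexed by a finite type 'm (so m = CARD('m) >= 1);
  vectors of R^n are real^'n (n = CARD('n) >= 1).
  A point u in R^{mn} is a function 'm => real^'n (u_i = u i).\<close>

definition strongly_convex_on :: "real \<Rightarrow> ('a::real_inner \<Rightarrow> real) \<Rightarrow> bool" where
  "strongly_convex_on c f \<longleftrightarrow>
     (\<forall>x y. \<forall>t::real. 0 \<le> t \<and> t \<le> 1 \<longrightarrow>
        f (t *\<^sub>R x + (1 - t) *\<^sub>R y) \<le> t * f x + (1 - t) * f y - c / 2 * t * (1 - t) * (norm (x - y))\<^sup>2)"

definition F_op :: "('m::finite \<Rightarrow> real) \<Rightarrow> ('m \<Rightarrow> real^'n \<Rightarrow> real^'n)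
      \<Rightarrow> ('m \<Rightarrow> real^'n) \<times> ('m \<Rightarrow> real^'n) \<times> (real^'n)
      \<Rightarrow> ('m \<Rightarrow> real^'n) \<times> ('m \<Rightarrow> real^'n) \<times> (real^'n)" where
  "F_op \<alpha> g w = (case w of (u, lam, z) \<Rightarrow>
     ((\<lambda>i. \<alpha> i *\<^sub>R (g i (u i) - lam i)),
      (\<lambda>i. \<alpha> i *\<^sub>R (u i - z)),
      (\<Sum>i\<in>UNIV. \<alpha> i *\<^sub>R lam i)))"

definition wdot :: "('m::finite \<Rightarrow> real^'n) \<times> ('m \<Rightarrow> real^'n) \<times> (real^'n)
      \<Rightarrow> ('m \<Rightarrow> real^'n) \<times> ('m \<Rightarrow> real^'n) \<times> (real^'n) \<Rightarrow> real" where
  "wdot w w' = (case w of (u, l, z) \<Rightarrow> case w' of (u', l', z') \<Rightarrow>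
      (\<Sum>i\<in>UNIV. u i \<bullet> u' i) + (\<Sum>i\<in>UNIV. l i \<bullet> l' i) + z \<bullet> z')"

definition udot :: "('m::finite \<Rightarrow> real^'n) \<Rightarrow> ('m \<Rightarrow> real^'n) \<Rightarrow> real" where
  "udot u u' = (\<Sum>i\<in>UNIV. u i \<bullet> u' i)"

definition gradL :: "('m::finite \<Rightarrow> real) \<Rightarrow> ('m \<Rightarrow> real) \<Rightarrow> ('m \<Rightarrow> real^'n \<Rightarrow> real^'n)
      \<Rightarrow> ('m \<Rightarrow> real^'n) \<Rightarrow> ('m \<Rightarrow> real^'n) \<Rightarrow> real^'n \<Rightarrow> ('m \<Rightarrow> real^'n)" where
  "gradL \<alpha> \<beta> g u lam z = (\<lambda>i. \<alpha> i *\<^sub>R (g i (u i) - lam i + \<beta> i *\<^sub>R (u i - z)))"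

text \<open>The quadratic form v^T H_1 v for v = (lambda, z), with
  H_1 = [[I_alpha I_beta^{-1}, I_alpha B], [B^T I_alpha, (1+delta) B^T I_alpha I_beta B]],
  written out block by block.\<close>
definition H1sq :: "('m::finite \<Rightarrow> real) \<Rightarrow> ('m \<Rightarrow> real) \<Rightarrow> real
      \<Rightarrow> ('m \<Rightarrow> real^'n) \<times> (real^'n) \<Rightarrow> real" where
  "H1sq \<alpha> \<beta> \<delta> v = (case v of (lam, z) \<Rightarrow>
      (\<Sum>i\<in>UNIV. (\<alpha> i / \<beta> i) * (lam i \<bullet> lam i))
      + (\<Sum>i\<in>UNIV. \<alpha> i * (lam i \<bullet> z))
      + (\<Sum>i\<in>UNIV. \<alpha> i * (z \<bullet> lam i))
      + (1 + \<delta>) * (\<Sum>i\<in>UNIV. \<alpha> i * \<beta> i) * (z \<bullet> z))"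

end

theory Submission
  imports Defs
begin

text \<open>The inequality holds with equality. The update of \<open>\<lambda>\<close> expresses \<open>u\<^sup>k\<^sup>+\<^sup>1 - z\<^sup>k\<^sup>+\<^sup>1\<close>
  and the update of \<open>z\<close> expresses \<open>B\<^sup>T I\<^sub>\<alpha> \<lambda>\<^sup>k\<^sup>+\<^sup>1\<close> through \<open>v\<^sup>k - v\<^sup>k\<^sup>+\<^sup>1\<close>, which turns
  \<open>(w\<^sup>k\<^sup>+\<^sup>1 - w)\<^sup>T F(w\<^sup>k\<^sup>+\<^sup>1)\<close> into \<open>(u\<^sup>k\<^sup>+\<^sup>1 - u)\<^sup>T \<nabla>\<^sub>uL + (v\<^sup>k\<^sup>+\<^sup>1 - v)\<^sup>T H\<^sub>1 (v\<^sup>k - v\<^sup>k\<^sup>+\<^sup>1)\<close>;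
  the polarization identity of the symmetric form \<open>H\<^sub>1\<close> finishes the argument. Positive
  definiteness of \<open>H\<^sub>1\<close> follows by completing the square.\<close>

definition H1_inner :: "('m::finite \<Rightarrow> real) \<Rightarrow> ('m \<Rightarrow> real) \<Rightarrow> real
      \<Rightarrow> ('m \<Rightarrow> real^'n) \<times> (real^'n) \<Rightarrow> ('m \<Rightarrow> real^'n) \<times> (real^'n) \<Rightarrow> real" where
  "H1_inner \<alpha> \<beta> \<delta> v v' = (case (v, v') of ((l, z), (l', z')) \<Rightarrow>
      (\<Sum>i\<in>UNIV. (\<alpha> i / \<beta> i) * (l i \<bullet> l' i))
      + (\<Sum>i\<in>UNIV. \<alpha> i * (l i \<bullet> z'))
      + (\<Sum>i\<in>UNIV. \<alpha> i * (z \<bullet> l' i))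
      + (1 + \<delta>) * (\<Sum>i\<in>UNIV. \<alpha> i * \<beta> i) * (z \<bullet> z'))"

lemma H1sq_polarization:
  fixes a b :: "'m::finite \<Rightarrow> real^'n"
  shows "H1sq \<alpha> \<beta> \<delta> (a, x) - H1sq \<alpha> \<beta> \<delta> (b, y) - H1sq \<alpha> \<beta> \<delta> (a - b, x - y)
     = 2 * H1_inner \<alpha> \<beta> \<delta> (a - b, x - y) (b, y)"
proof -
  have lam_part: "(\<Sum>i\<in>UNIV. (\<alpha> i / \<beta> i) * (a i \<bullet> a i)) - (\<Sum>i\<in>UNIV. (\<alpha> i / \<beta> i) * (b i \<bullet> b i))
     - (\<Sum>i\<in>UNIV. (\<alpha> i / \<beta> i) * ((a - b) i \<bullet> (a - b) i))
     = 2 * (\<Sum>i\<in>UNIV. (\<alpha> i / \<beta> i) * ((a - b) i \<bullet> b i))"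
    by (simp add: sum_subtractf[symmetric] sum_distrib_left inner_diff_left inner_diff_right
        inner_commute algebra_simps)
  have mixed_part: "(\<Sum>i\<in>UNIV. \<alpha> i * (a i \<bullet> x)) - (\<Sum>i\<in>UNIV. \<alpha> i * (b i \<bullet> y))
     - (\<Sum>i\<in>UNIV. \<alpha> i * ((a - b) i \<bullet> (x - y)))
     + ((\<Sum>i\<in>UNIV. \<alpha> i * (x \<bullet> a i)) - (\<Sum>i\<in>UNIV. \<alpha> i * (y \<bullet> b i))
     - (\<Sum>i\<in>UNIV. \<alpha> i * ((x - y) \<bullet> (a - b) i)))
     = 2 * (\<Sum>i\<in>UNIV. \<alpha> i * ((a - b) i \<bullet> y)) + 2 * (\<Sum>i\<in>UNIV. \<alpha> i * ((x - y) \<bullet> b i))"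
    by (simp add: sum_subtractf[symmetric] sum.distrib[symmetric] sum_distrib_left
        inner_diff_left inner_diff_right inner_commute algebra_simps)
  have z_part: "C * (x \<bullet> x) - C * (y \<bullet> y) - C * ((x - y) \<bullet> (x - y)) = 2 * (C * ((x - y) \<bullet> y))"
    for C :: real
    by (simp add: inner_diff_left inner_diff_right inner_commute algebra_simps)
  show ?thesis
    unfolding H1sq_def H1_inner_def using lam_part mixed_part z_part[of "(1 + \<delta>) * (\<Sum>i\<in>UNIV. \<alpha> i * \<beta> i)"]
    by simp
qed

lemma H1sq_completed_square:
  fixes l :: "'m::finite \<Rightarrow> real^'n"
  assumes "\<And>i. \<beta> i \<noteq> 0"
  shows "H1sq \<alpha> \<beta> \<delta> (l, z) = (\<Sum>i\<in>UNIV. \<alpha> i / \<beta> i * (norm (l i + \<beta> i *\<^sub>R z))\<^sup>2)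
           + \<delta> * (\<Sum>i\<in>UNIV. \<alpha> i * \<beta> i) * (norm z)\<^sup>2"
proof -
  have "\<alpha> i / \<beta> i * (norm (l i + \<beta> i *\<^sub>R z))\<^sup>2 =
      \<alpha> i / \<beta> i * (l i \<bullet> l i) + \<alpha> i * (l i \<bullet> z) + \<alpha> i * (z \<bullet> l i) + \<alpha> i * \<beta> i * (z \<bullet> z)" for i
    using assms[of i]
    by (simp add: power2_norm_eq_inner inner_add_left inner_add_right inner_commute field_simps)
  then show ?thesis
    unfolding H1sq_def
    by (simp add: power2_norm_eq_inner sum.distrib sum_distrib_left sum_distrib_right algebra_simps)
qed

lemma H1sq_pos:
  fixes l :: "'m::finite \<Rightarrow> real^'n"
  assumes \<alpha>_pos: "\<And>i. \<alpha> i > 0" and \<beta>_pos: "\<And>i. \<beta> i > 0" and "\<delta> > 0"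
    and nonzero: "(l, z) \<noteq> ((\<lambda>i. 0), 0)"
  shows "H1sq \<alpha> \<beta> \<delta> (l, z) > 0"
proof -
  define q where "q i = \<alpha> i / \<beta> i * (norm (l i + \<beta> i *\<^sub>R z))\<^sup>2" for i
  have q_nonneg: "q i \<ge> 0" for i
    unfolding q_def using \<alpha>_pos[of i] \<beta>_pos[of i] by simp
  have weight_sum_pos: "(\<Sum>i\<in>UNIV. \<alpha> i * \<beta> i) > 0"
    using \<alpha>_pos \<beta>_pos by (simp add: sum_pos)
  have "sum q UNIV + \<delta> * (\<Sum>i\<in>UNIV. \<alpha> i * \<beta> i) * (norm z)\<^sup>2 > 0"
  proof (cases "z = 0")
    case True
    with nonzero obtain j where "l j \<noteq> 0" by auto
    with True have "q j > 0"
      unfolding q_def using \<alpha>_pos[of j] \<beta>_pos[of j] by simp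
    then have "sum q UNIV > 0"
      using q_nonneg by (simp add: sum_pos2[of UNIV j])
    with True show ?thesis by simp
  next
    case False
    with weight_sum_pos \<open>\<delta> > 0\<close> have "\<delta> * (\<Sum>i\<in>UNIV. \<alpha> i * \<beta> i) * (norm z)\<^sup>2 > 0"
      by simp
    moreover have "sum q UNIV \<ge> 0"
      using q_nonneg by (simp add: sum_nonneg)
    ultimately show ?thesis by linarith
  qed
  moreover have "\<beta> i \<noteq> 0" for i
    using \<beta>_pos[of i] by simp
  ultimately show ?thesis
    unfolding q_def by (simp add: H1sq_completed_square)
qed

lemma weighted_multiplier_sum_update:
  fixes \<alpha> \<beta> :: "'m::finite \<Rightarrow> real" and lam lam' u' :: "'m \<Rightarrow> real^'n"
  assumes lam': "\<And>i. lam' i = lam i - \<beta> i *\<^sub>R (u' i - z)"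
    and z': "z' = (1 / (1 + \<delta>)) *\<^sub>R ((1 / (\<Sum>i\<in>UNIV. \<alpha> i * \<beta> i)) *\<^sub>R
            (\<Sum>i\<in>UNIV. \<alpha> i *\<^sub>R (\<beta> i *\<^sub>R u' i - lam' i))) + (\<delta> / (1 + \<delta>)) *\<^sub>R z"
    and "(\<Sum>i\<in>UNIV. \<alpha> i * \<beta> i) \<noteq> 0" and "1 + \<delta> \<noteq> 0"
  shows "(\<Sum>i\<in>UNIV. \<alpha> i *\<^sub>R lam' i)
     = (\<Sum>i\<in>UNIV. \<alpha> i *\<^sub>R (lam i - lam' i)) + ((1 + \<delta>) * (\<Sum>i\<in>UNIV. \<alpha> i * \<beta> i)) *\<^sub>R (z - z')"
proof -
  define S where "S = (\<Sum>i\<in>UNIV. \<alpha> i * \<beta> i)"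
  define P where "P = (\<Sum>i\<in>UNIV. \<alpha> i *\<^sub>R (\<beta> i *\<^sub>R u' i - lam' i))"
  have "((1 + \<delta>) * S) *\<^sub>R z' = P + (\<delta> * S) *\<^sub>R z"
    using z' assms(3,4) unfolding P_def S_def[symmetric] by (simp add: scaleR_add_right)
  moreover have "P = S *\<^sub>R z + (\<Sum>i\<in>UNIV. \<alpha> i *\<^sub>R (lam i - lam' i)) - (\<Sum>i\<in>UNIV. \<alpha> i *\<^sub>R lam' i)"
    unfolding P_def S_def
    by (simp add: lam' scaleR_sum_left sum_subtractf[symmetric] sum.distrib[symmetric] algebra_simps)
  ultimately show ?thesis unfolding S_def[symmetric] by (simp add: algebra_simps)
qed

lemma gradL_eq_multiplier_update:
  fixes lam lam' u' :: "'m::finite \<Rightarrow> real^'n"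
  assumes "\<And>i. lam' i = lam i - \<beta> i *\<^sub>R (u' i - z)"
  shows "gradL \<alpha> \<beta> g u' lam z = (\<lambda>i. \<alpha> i *\<^sub>R (g i (u' i) - lam' i))"
  unfolding gradL_def assms by (simp add: algebra_simps)

lemma F_op_inner_step_eq:
  fixes \<alpha> \<beta> :: "'m::finite \<Rightarrow> real" and lam lam' u' uu ll :: "'m \<Rightarrow> real^'n"
  assumes lam': "\<And>i. lam' i = lam i - \<beta> i *\<^sub>R (u' i - z)"
    and z': "z' = (1 / (1 + \<delta>)) *\<^sub>R ((1 / (\<Sum>i\<in>UNIV. \<alpha> i * \<beta> i)) *\<^sub>R
            (\<Sum>i\<in>UNIV. \<alpha> i *\<^sub>R (\<beta> i *\<^sub>R u' i - lam' i))) + (\<delta> / (1 + \<delta>)) *\<^sub>R z"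
    and \<beta>_nonzero: "\<And>i. \<beta> i \<noteq> 0"
    and "(\<Sum>i\<in>UNIV. \<alpha> i * \<beta> i) \<noteq> 0" and "1 + \<delta> \<noteq> 0"
  shows "wdot (u' - uu, lam' - ll, z' - zz) (F_op \<alpha> g (u', lam', z'))
     = udot (u' - uu) (gradL \<alpha> \<beta> g u' lam z)
       + H1_inner \<alpha> \<beta> \<delta> (lam - lam', z - z') (lam' - ll, z' - zz)"
proof -
  have u_part: "(\<Sum>i\<in>UNIV. (u' - uu) i \<bullet> (\<alpha> i *\<^sub>R (g i (u' i) - lam' i)))
      = udot (u' - uu) (gradL \<alpha> \<beta> g u' lam z)"
    unfolding gradL_eq_multiplier_update[OF lam'] udot_def ..
  have residual: "u' i - z' = (1 / \<beta> i) *\<^sub>R (lam i - lam' i) + (z - z')" for i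
    using lam'[of i] \<beta>_nonzero[of i] by simp
  have lam_part: "(\<Sum>i\<in>UNIV. (lam' - ll) i \<bullet> (\<alpha> i *\<^sub>R (u' i - z')))
     = (\<Sum>i\<in>UNIV. (\<alpha> i / \<beta> i) * ((lam - lam') i \<bullet> (lam' - ll) i))
       + (\<Sum>i\<in>UNIV. \<alpha> i * ((z - z') \<bullet> (lam' - ll) i))"
    unfolding sum.distrib[symmetric]
  proof (rule sum.cong)
    fix i
    show "(lam' - ll) i \<bullet> (\<alpha> i *\<^sub>R (u' i - z'))
      = \<alpha> i / \<beta> i * ((lam - lam') i \<bullet> (lam' - ll) i) + \<alpha> i * ((z - z') \<bullet> (lam' - ll) i)"
      unfolding residual
      by (simp add: inner_add_right inner_commute distrib_left)
  qed simp
  have z_part: "(z' - zz) \<bullet> (\<Sum>i\<in>UNIV. \<alpha> i *\<^sub>R lam' i)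
     = (\<Sum>i\<in>UNIV. \<alpha> i * ((lam - lam') i \<bullet> (z' - zz)))
       + (1 + \<delta>) * (\<Sum>i\<in>UNIV. \<alpha> i * \<beta> i) * ((z - z') \<bullet> (z' - zz))"
    unfolding weighted_multiplier_sum_update[OF lam' z' assms(4,5)]
    by (simp add: inner_add_right inner_sum_right inner_commute)
  show ?thesis
    unfolding wdot_def F_op_def H1_inner_def using u_part lam_part z_part by (simp add: inner_commute)
qed

theorem lemma1:
  fixes f :: "'m::finite \<Rightarrow> real^'n \<Rightarrow> real"
    and g :: "'m \<Rightarrow> real^'n \<Rightarrow> real^'n"
    and s c \<alpha> \<beta> \<sigma> :: "'m \<Rightarrow> real"
    and \<delta> :: real
    and u lam :: "nat \<Rightarrow> 'm \<Rightarrow> real^'n"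
    and z :: "nat \<Rightarrow> real^'n"
  assumes grad: "\<And>i x. (f i has_derivative (\<lambda>h. g i x \<bullet> h)) (at x)"
    and s_pos: "\<And>i. s i > 0"
    and lip: "\<And>i. (s i)-lipschitz_on UNIV (g i)"
    and c_pos: "\<And>i. c i > 0"
    and sconv: "\<And>i. strongly_convex_on (c i) (f i)"
    and alpha_pos: "\<And>i. \<alpha> i > 0"
    and alpha_sum: "(\<Sum>i\<in>UNIV. \<alpha> i) = 1"
    and beta_pos: "\<And>i. \<beta> i > 0"
    and delta_pos: "\<delta> > 0"
    and sigma_pos: "\<And>i. \<sigma> i > 0"
    and sigma_bd: "\<And>i. \<sigma> i < sqrt (2 * c i) / (sqrt (2 * c i) + sqrt (\<beta> i))"
    and step_u: "\<And>k i. norm (g i (u (Suc k) i) - lam k i + \<beta> i *\<^sub>R (u (Suc k) i - z k))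
                   \<le> \<sigma> i * norm (g i (u k i) - lam k i + \<beta> i *\<^sub>R (u k i - z k))"
    and step_lam: "\<And>k i. lam (Suc k) i = lam k i - \<beta> i *\<^sub>R (u (Suc k) i - z k)"
    and step_z: "\<And>k. z (Suc k) =
        (1 / (1 + \<delta>)) *\<^sub>R ((1 / (\<Sum>i\<in>UNIV. \<alpha> i * \<beta> i)) *\<^sub>R
            (\<Sum>i\<in>UNIV. \<alpha> i *\<^sub>R (\<beta> i *\<^sub>R u (Suc k) i - lam (Suc k) i)))
        + (\<delta> / (1 + \<delta>)) *\<^sub>R z k"
  shows "(\<forall>ll (zz::real^'n). (ll, zz) \<noteq> ((\<lambda>i. 0), 0) \<longrightarrow> H1sq \<alpha> \<beta> \<delta> (ll, zz) > 0) \<and>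
    (\<forall>k uu ll zz.
      wdot (u (Suc k) - uu, lam (Suc k) - ll, z (Suc k) - zz)
           (F_op \<alpha> g (u (Suc k), lam (Suc k), z (Suc k)))
      \<le> udot (u (Suc k) - uu) (gradL \<alpha> \<beta> g (u (Suc k)) (lam k) (z k))
         + 1/2 * (H1sq \<alpha> \<beta> \<delta> (lam k - ll, z k - zz)
                  - H1sq \<alpha> \<beta> \<delta> (lam (Suc k) - ll, z (Suc k) - zz)
                  - H1sq \<alpha> \<beta> \<delta> (lam k - lam (Suc k), z k - z (Suc k))))"
proof (intro conjI allI impI)
  fix ll :: "'m \<Rightarrow> real^'n" and zz :: "real^'n"
  assume "(ll, zz) \<noteq> ((\<lambda>i. 0), 0)"
  with alpha_pos beta_pos delta_pos show "H1sq \<alpha> \<beta> \<delta> (ll, zz) > 0" by (rule H1sq_pos)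
next
  fix k and uu ll :: "'m \<Rightarrow> real^'n" and zz :: "real^'n"
  have \<beta>_nonzero: "\<beta> i \<noteq> 0" for i
    using beta_pos[of i] by simp
  have "(\<Sum>i\<in>UNIV. \<alpha> i * \<beta> i) > 0"
    using alpha_pos beta_pos by (simp add: sum_pos)
  then have step_eq: "wdot (u (Suc k) - uu, lam (Suc k) - ll, z (Suc k) - zz)
           (F_op \<alpha> g (u (Suc k), lam (Suc k), z (Suc k)))
     = udot (u (Suc k) - uu) (gradL \<alpha> \<beta> g (u (Suc k)) (lam k) (z k))
       + H1_inner \<alpha> \<beta> \<delta> (lam k - lam (Suc k), z k - z (Suc k)) (lam (Suc k) - ll, z (Suc k) - zz)"
    using delta_pos by (intro F_op_inner_step_eq step_lam step_z \<beta>_nonzero) simp_all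
  have "lam k - ll - (lam (Suc k) - ll) = lam k - lam (Suc k)"
    and "z k - zz - (z (Suc k) - zz) = z k - z (Suc k)" by (simp_all add: fun_eq_iff)
  then have polarization: "H1sq \<alpha> \<beta> \<delta> (lam k - ll, z k - zz) - H1sq \<alpha> \<beta> \<delta> (lam (Suc k) - ll, z (Suc k) - zz)
      - H1sq \<alpha> \<beta> \<delta> (lam k - lam (Suc k), z k - z (Suc k))
    = 2 * H1_inner \<alpha> \<beta> \<delta> (lam k - lam (Suc k), z k - z (Suc k)) (lam (Suc k) - ll, z (Suc k) - zz)"
    using H1sq_polarization[of \<alpha> \<beta> \<delta> "lam k - ll" "z k - zz" "lam (Suc k) - ll" "z (Suc k) - zz"]
    by (simp only:)
  show "wdot (u (Suc k) - uu, lam (Suc k) - ll, z (Suc k) - zz)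
           (F_op \<alpha> g (u (Suc k), lam (Suc k), z (Suc k)))
      \<le> udot (u (Suc k) - uu) (gradL \<alpha> \<beta> g (u (Suc k)) (lam k) (z k))
         + 1/2 * (H1sq \<alpha> \<beta> \<delta> (lam k - ll, z k - zz)
                  - H1sq \<alpha> \<beta> \<delta> (lam (Suc k) - ll, z (Suc k) - zz)
                  - H1sq \<alpha> \<beta> \<delta> (lam k - lam (Suc k), z k - z (Suc k)))"
    unfolding step_eq polarization by simp
qed

end
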